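(* Let $(V,\tau)$ be a topological mixed lattice space. (a) If $A\subseteq V$ is balanced and absorbing, then $MF_1(A)=-MF_2(A)$, and the set $B=MF_1(A)+MF_2(A)$ is balanced and absorbing and has both of the following properties: ($y\in B$ and $0\le x\preccurlyeq y$) implies $x\in B$; ($y\in B$ and $0\preccurlyeq x\le y$) implies $x\in B$. If in addition $A$ is convex, then $MF_1(A)$, $MF_2(A)$ and $B$ are convex. (b) If $\tau$ is locally mixed-full, then every neighborhood of zero contains a balanced absorbing neighborhood $W$ of zero such that ($y\in W$, $0\le x\preccurlyeq y$) implies $x\in W$ and ($y\in W$, $0\preccurlyeq x\le y$) implies $x\in W$. If $\tau$ is moreover locally convex, $W$ can additionally be chosen convex.
   Context: A mixed lattice vector space $(V,\le,\preccurlyeq)$ is a real vector space $V$ with two partial orderings $\le$ (initial order) and $\preccurlyeq$ (specific order), each making $V$ a partially ordered vector space, with positive cones $V_p=\{x:0\le x\}$, $V_{sp}=\{x:0\preccurlyeq x\}$, such that: (1) for all $x,y$ the elements $x\curlyvee y=\min\{w: w\succcurlyeq x,\ w\ge y\}$ and $x\curlywedge y=\max\{w: w\preccurlyeq x,\ w\le y\}$ exist (min/max with respect to $\le$); (2) $x\preccurlyeq y$ implies $x\le y$; (3) $x\curlyvee y, x\curlywedge y\in V_{sp}$ whenever $x,y\in V_{sp}$. A topological mixed lattice space is such a $V$ with a vector topology $\tau$ for which $(x,y)\mapsto x\curlyvee y$ and $(x,y)\mapsto x\curlywedge y$ are continuous $V\times V\to V$ (product topology). For $A\subseteq V$: $MF_1(A)=\{y: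 x\preccurlyeq y\le z \text{ for some } x,z\in A\}$, $MF_2(A)=\{y: x\le y\preccurlyeq z \text{ for some } x,z\in A\}$. A vector topology is locally mixed-full if every neighborhood of zero contains a neighborhood $W$ of zero such that $y\in W$ and $0\preccurlyeq x\le y$ imply $x\in W$. *)

theory Defs
  imports "HOL-Analysis.Analysis"
begin

definition ordered_vs :: "('a::real_vector \<Rightarrow> 'a \<Rightarrow> bool) \<Rightarrow> bool" where
  "ordered_vs le \<longleftrightarrow>
     (\<forall>x. le x x) \<and>
     (\<forall>x y. le x y \<and> le y x \<longrightarrow> x = y) \<and>
     (\<forall>x y z. le x y \<and> le y z \<longrightarrow> le x z) \<and>
     (\<forall>x y z. le x y \<longrightarrow> le (x + z) (y + z)) \<and>
     (\<forall>x y (c::real). le x y \<and> 0 \<le> c \<longrightarrow> le (c *\<^sub>R x) (c *\<^sub>R y))"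

definition is_least_wrt :: "('a \<Rightarrow> 'a \<Rightarrow> bool) \<Rightarrow> 'a set \<Rightarrow> 'a \<Rightarrow> bool" where
  "is_least_wrt le S w \<longleftrightarrow> w \<in> S \<and> (\<forall>v\<in>S. le w v)"

definition is_greatest_wrt :: "('a \<Rightarrow> 'a \<Rightarrow> bool) \<Rightarrow> 'a set \<Rightarrow> 'a \<Rightarrow> bool" where
  "is_greatest_wrt le S w \<longleftrightarrow> w \<in> S \<and> (\<forall>v\<in>S. le v w)"

definition msup :: "('a \<Rightarrow> 'a \<Rightarrow> bool) \<Rightarrow> ('a \<Rightarrow> 'a \<Rightarrow> bool) \<Rightarrow> 'a \<Rightarrow> 'a \<Rightarrow> 'a" where
  "msup le sle x y = (THE w. is_least_wrt le {w. sle x w \<and> le y w} w)"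

definition minf :: "('a \<Rightarrow> 'a \<Rightarrow> bool) \<Rightarrow> ('a \<Rightarrow> 'a \<Rightarrow> bool) \<Rightarrow> 'a \<Rightarrow> 'a \<Rightarrow> 'a" where
  "minf le sle x y = (THE w. is_greatest_wrt le {w. sle w x \<and> le w y} w)"

(* le = initial order \<le>, sle = specific order \<preccurlyeq> *)
definition mixed_lattice_vs ::
  "('a::real_vector \<Rightarrow> 'a \<Rightarrow> bool) \<Rightarrow> ('a \<Rightarrow> 'a \<Rightarrow> bool) \<Rightarrow> bool" where
  "mixed_lattice_vs le sle \<longleftrightarrow>
     ordered_vs le \<and> ordered_vs sle \<and>
     (\<forall>x y. \<exists>w. is_least_wrt le {w. sle x w \<and> le y w} w) \<and>
     (\<forall>x y. \<exists>w. is_greatest_wrt le {w. sle w x \<and> le w y} w) \<and>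
     (\<forall>x y. sle x y \<longrightarrow> le x y) \<and>
     (\<forall>x y. sle 0 x \<and> sle 0 y \<longrightarrow> sle 0 (msup le sle x y) \<and> sle 0 (minf le sle x y))"

definition vector_topology :: "'a::real_vector topology \<Rightarrow> bool" where
  "vector_topology T \<longleftrightarrow>
     topspace T = UNIV \<and>
     continuous_map (prod_topology T T) T (\<lambda>(x, y). x + y) \<and>
     continuous_map (prod_topology (euclidean :: real topology) T) T (\<lambda>(c, x). c *\<^sub>R x)"

definition top_mixed_lattice_space ::
  "('a::real_vector \<Rightarrow> 'a \<Rightarrow> bool) \<Rightarrow> ('a \<Rightarrow> 'a \<Rightarrow> bool) \<Rightarrow> 'a topology \<Rightarrow> bool" where
  "top_mixed_lattice_space le sle T \<longleftrightarrow>
     mixed_lattice_vs le sle \<and> vector_topology T \<and>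
     continuous_map (prod_topology T T) T (\<lambda>(x, y). msup le sle x y) \<and>
     continuous_map (prod_topology T T) T (\<lambda>(x, y). minf le sle x y)"

definition nhd0 :: "'a::real_vector topology \<Rightarrow> 'a set \<Rightarrow> bool" where
  "nhd0 T N \<longleftrightarrow> (\<exists>U. openin T U \<and> 0 \<in> U \<and> U \<subseteq> N)"

definition balanced :: "'a::real_vector set \<Rightarrow> bool" where
  "balanced A \<longleftrightarrow> (\<forall>x\<in>A. \<forall>c::real. \<bar>c\<bar> \<le> 1 \<longrightarrow> c *\<^sub>R x \<in> A)"

definition absorbing :: "'a::real_vector set \<Rightarrow> bool" where
  "absorbing A \<longleftrightarrow> (\<forall>x. \<exists>t>0. \<forall>c::real. \<bar>c\<bar> \<le> t \<longrightarrow> c *\<^sub>R x \<in> A)"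

definition MF1 :: "('a \<Rightarrow> 'a \<Rightarrow> bool) \<Rightarrow> ('a \<Rightarrow> 'a \<Rightarrow> bool) \<Rightarrow> 'a set \<Rightarrow> 'a set" where
  "MF1 le sle A = {y. \<exists>x\<in>A. \<exists>z\<in>A. sle x y \<and> le y z}"

definition MF2 :: "('a \<Rightarrow> 'a \<Rightarrow> bool) \<Rightarrow> ('a \<Rightarrow> 'a \<Rightarrow> bool) \<Rightarrow> 'a set \<Rightarrow> 'a set" where
  "MF2 le sle A = {y. \<exists>x\<in>A. \<exists>z\<in>A. le x y \<and> sle y z}"

definition setsum :: "'a::plus set \<Rightarrow> 'a set \<Rightarrow> 'a set" where
  "setsum A B = {a + b | a b. a \<in> A \<and> b \<in> B}"

definition locally_mixed_full ::
  "('a::real_vector \<Rightarrow> 'a \<Rightarrow> bool) \<Rightarrow> ('a \<Rightarrow> 'a \<Rightarrow> bool) \<Rightarrow> 'a topology \<Rightarrow> bool" where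
  "locally_mixed_full le sle T \<longleftrightarrow>
     (\<forall>N. nhd0 T N \<longrightarrow> (\<exists>W. nhd0 T W \<and> W \<subseteq> N \<and>
        (\<forall>x y. y \<in> W \<and> sle 0 x \<and> le x y \<longrightarrow> x \<in> W)))"

definition locally_convex_top :: "'a::real_vector topology \<Rightarrow> bool" where
  "locally_convex_top T \<longleftrightarrow> (\<forall>N. nhd0 T N \<longrightarrow> (\<exists>W. nhd0 T W \<and> W \<subseteq> N \<and> convex W))"

end

theory Submission
  imports Defs
begin

text \<open>Only the vector-ordering axioms of \<open>\<le>\<close> and \<open>\<preccurlyeq>\<close> (and, for (b), the vector topology)
  are used. Negation reverses both orders, so for balanced
  \<open>A\<close> it maps \<open>MF\<^sub>1(A)\<close> onto \<open>MF\<^sub>2(A)\<close>; swapping the two orders exchanges \<open>MF\<^sub>1\<close> and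
  \<open>MF\<^sub>2\<close>, so each fact about \<open>B = MF\<^sub>1(A) + MF\<^sub>2(A)\<close> comes with its mirror image.
  If \<open>y = a + b\<close> with \<open>a \<le> q\<close>, \<open>b \<preccurlyeq> s\<close> and \<open>q, s \<in> A\<close>, then \<open>0 \<le> x \<preccurlyeq> y\<close> gives
  \<open>-q \<le> x - a \<preccurlyeq> s\<close>, so \<open>x = a + (x - a) \<in> B\<close>.

  For (b), take balanced neighbourhoods \<open>U + U \<subseteq> N\<close>, \<open>V + V \<subseteq> U\<close>, a mixed-full \<open>W \<subseteq> V\<close>
  and a balanced neighbourhood \<open>A\<close> with \<open>A - A \<subseteq> W\<close>. Every \<open>y\<close> with \<open>p \<preccurlyeq> y \<le> q\<close>,
  \<open>p, q \<in> A\<close>, satisfies \<open>0 \<preccurlyeq> y - p \<le> q - p \<in> W\<close>, hence \<open>MF\<^sub>1(A) \<subseteq> A + W \<subseteq> U\<close> and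
  \<open>B \<subseteq> U + U \<subseteq> N\<close>. As \<open>B \<supseteq> A\<close> is a neighbourhood of zero, part (a) applied to \<open>A\<close>
  gives all remaining properties of \<open>W = B\<close>.\<close>

lemma ordered_vs_refl: "ordered_vs le \<Longrightarrow> le x x"
  by (simp add: ordered_vs_def)

lemma ordered_vs_trans: "ordered_vs le \<Longrightarrow> le x y \<Longrightarrow> le y z \<Longrightarrow> le x z"
  unfolding ordered_vs_def by blast

lemma ordered_vs_add_right: "ordered_vs le \<Longrightarrow> le x y \<Longrightarrow> le (x + z) (y + z)"
  unfolding ordered_vs_def by blast

lemma ordered_vs_diff_right: "ordered_vs le \<Longrightarrow> le x y \<Longrightarrow> le (x - z) (y - z)"
  using ordered_vs_add_right[of le x y "- z"] by simp

lemma ordered_vs_scaleR: "ordered_vs le \<Longrightarrow> le x y \<Longrightarrow> 0 \<le> c \<Longrightarrow> le (c *\<^sub>R x) (c *\<^sub>R y)"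
  unfolding ordered_vs_def by blast

lemma ordered_vs_add:
  assumes "ordered_vs le" "le x y" "le x' y'"
  shows "le (x + x') (y + y')"
proof -
  have "le (x + x') (y + x')"
    using assms(1,2) by (rule ordered_vs_add_right)
  moreover have "le (y + x') (y + y')"
    using ordered_vs_add_right[OF assms(1,3), of y] by (simp add: add.commute)
  ultimately show ?thesis
    by (rule ordered_vs_trans[OF assms(1)])
qed

lemma ordered_vs_uminus:
  assumes "ordered_vs le" "le x y"
  shows "le (- y) (- x)"
proof -
  have "le (x - (x + y)) (y - (x + y))"
    using assms by (rule ordered_vs_diff_right)
  moreover have "x - (x + y) = - y" "y - (x + y) = - x"
    by (simp_all add: algebra_simps)
  ultimately show ?thesis
    by simp
qed

lemma ordered_vs_convex_comb:
  assumes "ordered_vs le" "le x y" "le x' y'" "0 \<le> u" "0 \<le> v"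
  shows "le (u *\<^sub>R x + v *\<^sub>R x') (u *\<^sub>R y + v *\<^sub>R y')"
  using assms(1) ordered_vs_scaleR[OF assms(1,2,4)] ordered_vs_scaleR[OF assms(1,3,5)]
  by (rule ordered_vs_add)

lemma balanced_uminus: "balanced A \<Longrightarrow> x \<in> A \<Longrightarrow> - x \<in> A"
  unfolding balanced_def by (metis abs_minus_cancel abs_one order_refl scaleR_minus1_left)

lemma balanced_scaleR: "balanced A \<Longrightarrow> x \<in> A \<Longrightarrow> 0 \<le> c \<Longrightarrow> c \<le> 1 \<Longrightarrow> c *\<^sub>R x \<in> A"
  unfolding balanced_def by auto

lemma balancedI:
  assumes "\<And>x. x \<in> A \<Longrightarrow> - x \<in> A"
    and "\<And>x c. x \<in> A \<Longrightarrow> 0 \<le> c \<Longrightarrow> c \<le> 1 \<Longrightarrow> c *\<^sub>R x \<in> A"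
  shows "balanced A"
  unfolding balanced_def
proof (intro ballI allI impI)
  fix x and c :: real
  assume "x \<in> A" "\<bar>c\<bar> \<le> 1"
  show "c *\<^sub>R x \<in> A"
  proof (cases "0 \<le> c")
    case True
    with \<open>x \<in> A\<close> \<open>\<bar>c\<bar> \<le> 1\<close> show ?thesis by (simp add: assms(2))
  next
    case False
    then have "c *\<^sub>R x = - (\<bar>c\<bar> *\<^sub>R x)" by simp
    with \<open>x \<in> A\<close> \<open>\<bar>c\<bar> \<le> 1\<close> show ?thesis by (simp add: assms)
  qed
qed

lemma absorbing_zero: "absorbing A \<Longrightarrow> 0 \<in> A"
  unfolding absorbing_def by (metis abs_zero less_imp_le scaleR_zero_left)

lemma absorbing_mono: "absorbing A \<Longrightarrow> A \<subseteq> B \<Longrightarrow> absorbing B"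
  unfolding absorbing_def by blast

lemma setsum_commute:
  fixes A B :: "'a::ab_semigroup_add set"
  shows "setsum A B = setsum B A"
proof -
  have "x \<in> setsum D C" if "x \<in> setsum C D" for x and C D :: "'a set"
  proof -
    from that obtain c d where "x = d + c" "c \<in> C" "d \<in> D"
      unfolding setsum_def by (auto simp: add.commute)
    then show ?thesis
      unfolding setsum_def by blast
  qed
  then show ?thesis
    by blast
qed

lemma subset_setsum:
  fixes A B :: "'a::monoid_add set"
  assumes "0 \<in> B"
  shows "A \<subseteq> setsum A B"
proof
  fix a assume "a \<in> A"
  moreover have "a = a + 0"
    by simp
  ultimately show "a \<in> setsum A B"
    unfolding setsum_def using assms by blast
qed

lemma setsum_mono: "A \<subseteq> A' \<Longrightarrow> B \<subseteq> B' \<Longrightarrow> setsum A B \<subseteq> setsum A' B'"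
  unfolding setsum_def by blast

lemma convex_setsum:
  assumes "convex A" "convex B"
  shows "convex (setsum A B)"
proof -
  have "setsum A B = (\<Union>x\<in>A. \<Union>y\<in>B. {x + y})"
    unfolding setsum_def by blast
  with assms show ?thesis
    by (simp add: convex_sums)
qed

section \<open>Mixed full hulls\<close>

lemma MF2_eq_MF1_swap: "MF2 le sle = MF1 sle le"
  unfolding MF1_def MF2_def by (auto simp: fun_eq_iff)

lemma subset_MF1: "ordered_vs le \<Longrightarrow> ordered_vs sle \<Longrightarrow> A \<subseteq> MF1 le sle A"
  unfolding MF1_def by (blast intro: ordered_vs_refl)

lemma uminus_mem_MF1:
  assumes "ordered_vs le" "ordered_vs sle" "balanced A" "y \<in> MF1 le sle A"
  shows "- y \<in> MF2 le sle A"
proof -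
  from assms(4) obtain x z where xz: "x \<in> A" "z \<in> A" "sle x y" "le y z"
    unfolding MF1_def by blast
  have "- z \<in> A" "- x \<in> A"
    using assms(3) xz(1,2) by (simp_all add: balanced_uminus)
  moreover have "le (- z) (- y)" "sle (- y) (- x)"
    using ordered_vs_uminus[OF assms(1) xz(4)] ordered_vs_uminus[OF assms(2) xz(3)] .
  ultimately show ?thesis
    unfolding MF2_def by blast
qed

lemma MF1_eq_uminus_MF2:
  assumes "ordered_vs le" "ordered_vs sle" "balanced A"
  shows "MF1 le sle A = uminus ` MF2 le sle A"
proof
  show "MF1 le sle A \<subseteq> uminus ` MF2 le sle A"
    using uminus_mem_MF1[OF assms] by (metis image_eqI minus_minus subsetI)
  show "uminus ` MF2 le sle A \<subseteq> MF1 le sle A"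
    using uminus_mem_MF1[OF assms(2,1,3)] by (auto simp: MF2_eq_MF1_swap)
qed

lemma scaleR_mem_MF1:
  assumes "ordered_vs le" "ordered_vs sle" "balanced A" "y \<in> MF1 le sle A"
    and "0 \<le> c" "c \<le> 1"
  shows "c *\<^sub>R y \<in> MF1 le sle A"
proof -
  from assms(4) obtain x z where xz: "x \<in> A" "z \<in> A" "sle x y" "le y z"
    unfolding MF1_def by blast
  have "c *\<^sub>R x \<in> A" "c *\<^sub>R z \<in> A"
    using assms(3,5,6) xz(1,2) by (simp_all add: balanced_scaleR)
  moreover have "sle (c *\<^sub>R x) (c *\<^sub>R y)" "le (c *\<^sub>R y) (c *\<^sub>R z)"
    using ordered_vs_scaleR[OF assms(2) xz(3) assms(5)] ordered_vs_scaleR[OF assms(1) xz(4) assms(5)] .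
  ultimately show ?thesis
    unfolding MF1_def by blast
qed

lemma convex_MF1:
  assumes "ordered_vs le" "ordered_vs sle" "convex A"
  shows "convex (MF1 le sle A)"
  unfolding convex_def
proof (intro ballI allI impI)
  fix y y' and u v :: real
  assume "y \<in> MF1 le sle A" "y' \<in> MF1 le sle A" and uv: "0 \<le> u" "0 \<le> v" "u + v = 1"
  then obtain x z x' z' where xz: "x \<in> A" "z \<in> A" "sle x y" "le y z"
    and xz': "x' \<in> A" "z' \<in> A" "sle x' y'" "le y' z'"
    unfolding MF1_def by blast
  have "u *\<^sub>R x + v *\<^sub>R x' \<in> A" "u *\<^sub>R z + v *\<^sub>R z' \<in> A"
    using assms(3) xz xz' uv unfolding convex_def by auto
  moreover have "sle (u *\<^sub>R x + v *\<^sub>R x') (u *\<^sub>R y + v *\<^sub>R y')"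
    using assms(2) xz(3) xz'(3) uv(1,2) by (rule ordered_vs_convex_comb)
  moreover have "le (u *\<^sub>R y + v *\<^sub>R y') (u *\<^sub>R z + v *\<^sub>R z')"
    using assms(1) xz(4) xz'(4) uv(1,2) by (rule ordered_vs_convex_comb)
  ultimately show "u *\<^sub>R y + v *\<^sub>R y' \<in> MF1 le sle A"
    unfolding MF1_def by blast
qed

lemma convex_MF2:
  assumes "ordered_vs le" "ordered_vs sle" "convex A"
  shows "convex (MF2 le sle A)"
  unfolding MF2_eq_MF1_swap using assms(2,1,3) by (rule convex_MF1)

lemma convex_MF_sum:
  assumes "ordered_vs le" "ordered_vs sle" "convex A"
  shows "convex (setsum (MF1 le sle A) (MF2 le sle A))"
  using convex_MF1[OF assms] convex_MF2[OF assms] by (rule convex_setsum)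

lemma balanced_MF_sum:
  assumes "ordered_vs le" "ordered_vs sle" "balanced A"
  shows "balanced (setsum (MF1 le sle A) (MF2 le sle A))"
proof (rule balancedI)
  fix y assume "y \<in> setsum (MF1 le sle A) (MF2 le sle A)"
  then obtain a b where "y = a + b" "a \<in> MF1 le sle A" "b \<in> MF1 sle le A"
    unfolding setsum_def MF2_eq_MF1_swap by blast
  then have "- y = - b + - a" "- b \<in> MF1 le sle A" "- a \<in> MF1 sle le A"
    using uminus_mem_MF1[OF assms] uminus_mem_MF1[OF assms(2,1,3)]
    by (auto simp: MF2_eq_MF1_swap)
  then show "- y \<in> setsum (MF1 le sle A) (MF2 le sle A)"
    unfolding setsum_def MF2_eq_MF1_swap by blast
next
  fix y and c :: real
  assume "y \<in> setsum (MF1 le sle A) (MF2 le sle A)" "0 \<le> c" "c \<le> 1"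
  then obtain a b where "y = a + b" "a \<in> MF1 le sle A" "b \<in> MF1 sle le A"
    and "0 \<le> c" "c \<le> 1"
    unfolding setsum_def MF2_eq_MF1_swap by blast
  then have "c *\<^sub>R y = c *\<^sub>R a + c *\<^sub>R b"
    "c *\<^sub>R a \<in> MF1 le sle A" "c *\<^sub>R b \<in> MF1 sle le A"
    using scaleR_mem_MF1[OF assms] scaleR_mem_MF1[OF assms(2,1,3)]
    by (simp_all add: scaleR_right_distrib)
  then show "c *\<^sub>R y \<in> setsum (MF1 le sle A) (MF2 le sle A)"
    unfolding setsum_def MF2_eq_MF1_swap by blast
qed

lemma MF_sum_full:
  assumes le: "ordered_vs le" and sle: "ordered_vs sle" and "balanced A"
    and "y \<in> setsum (MF1 le sle A) (MF2 le sle A)" "le 0 x" "sle x y"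
  shows "x \<in> setsum (MF1 le sle A) (MF2 le sle A)"
proof -
  from assms(4) obtain a b where ab: "y = a + b" "a \<in> MF1 le sle A" "b \<in> MF2 le sle A"
    unfolding setsum_def by blast
  from ab(2) obtain q where q: "q \<in> A" "le a q"
    unfolding MF1_def by blast
  from ab(3) obtain s where s: "s \<in> A" "sle b s"
    unfolding MF2_def by blast
  have "le (0 + a) (x + q)"
    using le \<open>le 0 x\<close> q(2) by (rule ordered_vs_add)
  then have "le ((0 + a) - (a + q)) ((x + q) - (a + q))"
    by (rule ordered_vs_diff_right[OF le])
  then have "le (- q) (x - a)"
    by (simp add: algebra_simps)
  moreover have "sle (x - a) s"
    using ordered_vs_diff_right[OF sle \<open>sle x y\<close>, of a] ab(1) s(2)
    by (auto intro: ordered_vs_trans[OF sle])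
  ultimately have "x - a \<in> MF2 le sle A"
    unfolding MF2_def using balanced_uminus[OF \<open>balanced A\<close> q(1)] s(1) by blast
  moreover have "x = a + (x - a)"
    by simp
  ultimately show ?thesis
    using ab(2) unfolding setsum_def by blast
qed

lemma subset_MF_sum:
  assumes "ordered_vs le" "ordered_vs sle" "0 \<in> A"
  shows "A \<subseteq> setsum (MF1 le sle A) (MF2 le sle A)"
proof -
  have "0 \<in> MF2 le sle A"
    using subset_MF1[OF assms(2,1)] assms(3) by (auto simp: MF2_eq_MF1_swap)
  then show ?thesis
    using subset_MF1[OF assms(1,2)] subset_setsum by blast
qed

lemma MF_sum_properties:
  assumes le: "ordered_vs le" and sle: "ordered_vs sle" and "balanced A" "absorbing A"
  shows "MF1 le sle A = uminus ` MF2 le sle A \<and>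
            balanced (setsum (MF1 le sle A) (MF2 le sle A)) \<and>
            absorbing (setsum (MF1 le sle A) (MF2 le sle A)) \<and>
            (\<forall>x y. y \<in> setsum (MF1 le sle A) (MF2 le sle A) \<and> le 0 x \<and> sle x y
                   \<longrightarrow> x \<in> setsum (MF1 le sle A) (MF2 le sle A)) \<and>
            (\<forall>x y. y \<in> setsum (MF1 le sle A) (MF2 le sle A) \<and> sle 0 x \<and> le x y
                   \<longrightarrow> x \<in> setsum (MF1 le sle A) (MF2 le sle A)) \<and>
            (convex A \<longrightarrow> convex (MF1 le sle A) \<and> convex (MF2 le sle A) \<and>
                          convex (setsum (MF1 le sle A) (MF2 le sle A)))"
proof (intro conjI allI impI)
  let ?B = "setsum (MF1 le sle A) (MF2 le sle A)"
  have "A \<subseteq> ?B"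
    using le sle absorbing_zero[OF \<open>absorbing A\<close>] by (rule subset_MF_sum)
  then show "absorbing ?B"
    using \<open>absorbing A\<close> by (rule absorbing_mono[rotated])
  show "MF1 le sle A = uminus ` MF2 le sle A"
    using le sle \<open>balanced A\<close> by (rule MF1_eq_uminus_MF2)
  show "balanced ?B"
    using le sle \<open>balanced A\<close> by (rule balanced_MF_sum)
  show "x \<in> ?B" if "y \<in> ?B \<and> le 0 x \<and> sle x y" for x y
    using that by (elim conjE) (rule MF_sum_full[OF le sle \<open>balanced A\<close>])
  have swap: "?B = setsum (MF1 sle le A) (MF2 sle le A)"
    by (simp add: MF2_eq_MF1_swap setsum_commute)
  show "x \<in> ?B" if "y \<in> ?B \<and> sle 0 x \<and> le x y" for x y
  proof -
    from that have "y \<in> setsum (MF1 sle le A) (MF2 sle le A)" "sle 0 x" "le x y"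
      unfolding swap by auto
    then have "x \<in> setsum (MF1 sle le A) (MF2 sle le A)"
      by (rule MF_sum_full[OF sle le \<open>balanced A\<close>])
    then show ?thesis
      unfolding swap .
  qed
  assume "convex A"
  show "convex (MF1 le sle A)" "convex (MF2 le sle A)" "convex ?B"
    using le sle \<open>convex A\<close> by (rule convex_MF1 convex_MF2 convex_MF_sum)+
qed

section \<open>Neighbourhoods of zero in a vector topology\<close>

lemma vector_topology_topspace: "vector_topology T \<Longrightarrow> topspace T = UNIV"
  by (simp add: vector_topology_def)

lemma continuous_map_prod_preimage_box:
  assumes "continuous_map (prod_topology X Y) Z f" "openin Z U"
    and "a \<in> topspace X" "b \<in> topspace Y" "f (a, b) \<in> U"
  obtains S V where "openin X S" "openin Y V" "a \<in> S" "b \<in> V"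
    "\<And>x y. x \<in> S \<Longrightarrow> y \<in> V \<Longrightarrow> f (x, y) \<in> U"
proof -
  have "openin (prod_topology X Y) {z \<in> topspace (prod_topology X Y). f z \<in> U}"
    using assms(1,2) by (rule openin_continuous_map_preimage)
  moreover have "(a, b) \<in> {z \<in> topspace (prod_topology X Y). f z \<in> U}"
    using assms(3-5) by simp
  ultimately obtain S V where "openin X S" "openin Y V" "a \<in> S" "b \<in> V"
    and box: "S \<times> V \<subseteq> {z \<in> topspace (prod_topology X Y). f z \<in> U}"
    unfolding openin_prod_topology_alt by (elim allE impE exE conjE)
  moreover have "f (x, y) \<in> U" if "x \<in> S" "y \<in> V" for x y
    using box that by blast
  ultimately show ?thesis
    using that by blast
qed

lemma nhd0_zero: "nhd0 T N \<Longrightarrow> 0 \<in> N"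
  unfolding nhd0_def by blast

lemma nhd0_mono: "nhd0 T A \<Longrightarrow> A \<subseteq> B \<Longrightarrow> nhd0 T B"
  unfolding nhd0_def by blast

lemma nhd0_half:
  assumes "vector_topology T" "nhd0 T N"
  obtains V where "nhd0 T V" "setsum V V \<subseteq> N"
proof -
  obtain U where U: "openin T U" "0 \<in> U" "U \<subseteq> N"
    using assms(2) unfolding nhd0_def by blast
  have "continuous_map (prod_topology T T) T (\<lambda>(x, y). x + y)"
    using assms(1) by (simp add: vector_topology_def)
  moreover have "0 \<in> topspace T" "(\<lambda>(x, y). x + y) (0, 0) \<in> U"
    using U(2) vector_topology_topspace[OF assms(1)] by simp_all
  ultimately obtain S S' where S: "openin T S" "openin T S'" "0 \<in> S" "0 \<in> S'"
    and sum: "\<And>x y. x \<in> S \<Longrightarrow> y \<in> S' \<Longrightarrow> x + y \<in> U"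
    using U(1) by (elim continuous_map_prod_preimage_box) auto
  show ?thesis
  proof
    show "nhd0 T (S \<inter> S')"
      unfolding nhd0_def using S by blast
    show "setsum (S \<inter> S') (S \<inter> S') \<subseteq> N"
      unfolding setsum_def using sum U(3) by blast
  qed
qed

lemma continuous_map_scaleR_left:
  assumes "vector_topology T"
  shows "continuous_map euclidean T (\<lambda>c. c *\<^sub>R x)"
proof -
  have "continuous_map euclidean (prod_topology euclidean T) (\<lambda>c. (c, x))"
    using vector_topology_topspace[OF assms] by (intro continuous_map_pairedI) auto
  moreover have "continuous_map (prod_topology euclidean T) T (\<lambda>(c, x). c *\<^sub>R x)"
    using assms by (simp add: vector_topology_def)
  ultimately show ?thesis
    by (auto dest: continuous_map_compose simp: o_def)
qed

lemma continuous_map_scaleR_right: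
  assumes "vector_topology T"
  shows "continuous_map T T (\<lambda>x. c *\<^sub>R x)"
proof -
  have "continuous_map T (prod_topology euclidean T) (\<lambda>x. (c, x))"
    by (intro continuous_map_pairedI) auto
  moreover have "continuous_map (prod_topology euclidean T) T (\<lambda>(c, x). c *\<^sub>R x)"
    using assms by (simp add: vector_topology_def)
  ultimately show ?thesis
    by (auto dest: continuous_map_compose simp: o_def)
qed

lemma nhd0_absorbing:
  assumes "vector_topology T" "nhd0 T N"
  shows "absorbing N"
  unfolding absorbing_def
proof
  fix x
  obtain U where U: "openin T U" "0 \<in> U" "U \<subseteq> N"
    using assms(2) unfolding nhd0_def by blast
  have "open {c::real. c *\<^sub>R x \<in> U}"
    using openin_continuous_map_preimage[OF continuous_map_scaleR_left[OF assms(1)] U(1)]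
    by simp
  moreover have "0 \<in> {c::real. c *\<^sub>R x \<in> U}"
    using U(2) by simp
  ultimately obtain e where "e > 0" "cball 0 e \<subseteq> {c::real. c *\<^sub>R x \<in> U}"
    using open_contains_cball by blast
  then show "\<exists>t>0. \<forall>c::real. \<bar>c\<bar> \<le> t \<longrightarrow> c *\<^sub>R x \<in> N"
    using U(3) by (auto simp: subset_iff)
qed

definition balanced_core :: "'a::real_vector set \<Rightarrow> 'a set" where
  "balanced_core M = {x. \<forall>c::real. \<bar>c\<bar> \<le> 1 \<longrightarrow> c *\<^sub>R x \<in> M}"

lemma balanced_core_subset: "balanced_core M \<subseteq> M"
  unfolding balanced_core_def by (force dest: spec[of _ 1])

lemma balanced_balanced_core: "balanced (balanced_core M)"
  unfolding balanced_def balanced_core_def by (simp add: abs_mult mult_le_one)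

lemma convex_balanced_core:
  assumes "convex M"
  shows "convex (balanced_core M)"
  unfolding convex_def
proof (intro ballI allI impI)
  fix x y and u v :: real
  assume xy: "x \<in> balanced_core M" "y \<in> balanced_core M" and uv: "0 \<le> u" "0 \<le> v" "u + v = 1"
  show "u *\<^sub>R x + v *\<^sub>R y \<in> balanced_core M"
    unfolding balanced_core_def
  proof (intro CollectI allI impI)
    fix c :: real assume "\<bar>c\<bar> \<le> 1"
    then have "u *\<^sub>R (c *\<^sub>R x) + v *\<^sub>R (c *\<^sub>R y) \<in> M"
      using assms xy uv unfolding convex_def balanced_core_def by blast
    then show "c *\<^sub>R (u *\<^sub>R x + v *\<^sub>R y) \<in> M"
      by (simp add: algebra_simps)
  qed
qed

text \<open>Continuity of \<open>(c, x) \<mapsto> c x\<close> at \<open>(0, 0)\<close> gives \<open>e > 0\<close> and a neighbourhood \<open>V\<close>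
  of zero with \<open>c V \<subseteq> M\<close> for \<open>|c| \<le> e\<close>; then \<open>e V\<close> lies in the balanced core.\<close>

lemma nhd0_balanced_core:
  assumes "vector_topology T" "nhd0 T M"
  shows "nhd0 T (balanced_core M)"
proof -
  obtain U where U: "openin T U" "0 \<in> U" "U \<subseteq> M"
    using assms(2) unfolding nhd0_def by blast
  have "continuous_map (prod_topology euclidean T) T (\<lambda>(c, x). c *\<^sub>R x)"
    using assms(1) by (simp add: vector_topology_def)
  moreover have "0 \<in> topspace T" "(\<lambda>(c, x). c *\<^sub>R x) (0::real, 0) \<in> U"
    using U(2) vector_topology_topspace[OF assms(1)] by simp_all
  ultimately obtain S V where S: "open S" "(0::real) \<in> S" and V: "openin T V" "0 \<in> V"
    and mult: "\<And>c x. c \<in> S \<Longrightarrow> x \<in> V \<Longrightarrow> c *\<^sub>R x \<in> U"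
    using U(1) by (elim continuous_map_prod_preimage_box) auto
  obtain e where e: "e > 0" "cball 0 e \<subseteq> S"
    using S open_contains_cball by blast
  define W where "W = {x \<in> topspace T. (1 / e) *\<^sub>R x \<in> V}"
  have "openin T W"
    unfolding W_def using continuous_map_scaleR_right[OF assms(1)] V(1)
    by (rule openin_continuous_map_preimage)
  moreover have "0 \<in> W"
    unfolding W_def using V(2) vector_topology_topspace[OF assms(1)] by simp
  moreover have "W \<subseteq> balanced_core M"
  proof
    fix x assume "x \<in> W"
    then have x: "(1 / e) *\<^sub>R x \<in> V"
      unfolding W_def by simp
    show "x \<in> balanced_core M"
      unfolding balanced_core_def
    proof (intro CollectI allI impI)
      fix c :: real assume "\<bar>c\<bar> \<le> 1"
      then have "\<bar>c * e\<bar> \<le> e"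
        using e(1) by (simp add: abs_mult mult_left_le_one_le)
      then have "(c * e) *\<^sub>R ((1 / e) *\<^sub>R x) \<in> U"
        using e(2) x by (intro mult) (auto simp: dist_real_def)
      then show "c *\<^sub>R x \<in> M"
        using e(1) U(3) by auto
    qed
  qed
  ultimately show ?thesis
    unfolding nhd0_def by blast
qed

lemma nhd0_balanced_half:
  assumes "vector_topology T" "nhd0 T N"
  obtains V where "nhd0 T V" "balanced V" "setsum V V \<subseteq> N"
proof -
  obtain U where "nhd0 T U" "setsum U U \<subseteq> N"
    using assms by (rule nhd0_half)
  moreover have "setsum (balanced_core U) (balanced_core U) \<subseteq> setsum U U"
    by (rule setsum_mono[OF balanced_core_subset balanced_core_subset])
  ultimately show thesis
    using that nhd0_balanced_core[OF assms(1)] balanced_balanced_core by blast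
qed

section \<open>Locally mixed-full topologies\<close>

lemma MF1_subset_setsum:
  assumes le: "ordered_vs le" and sle: "ordered_vs sle"
    and full: "\<And>x y. y \<in> W \<Longrightarrow> sle 0 x \<Longrightarrow> le x y \<Longrightarrow> x \<in> W"
    and diff: "\<And>p q. p \<in> A \<Longrightarrow> q \<in> A \<Longrightarrow> q - p \<in> W"
  shows "MF1 le sle A \<subseteq> setsum A W"
proof
  fix y assume "y \<in> MF1 le sle A"
  then obtain p q where pq: "p \<in> A" "q \<in> A" "sle p y" "le y q"
    unfolding MF1_def by blast
  have "sle (p - p) (y - p)"
    using sle pq(3) by (rule ordered_vs_diff_right)
  moreover have "le (y - p) (q - p)"
    using le pq(4) by (rule ordered_vs_diff_right)
  ultimately have "y - p \<in> W"
    using full diff[OF pq(1,2)] by simp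
  moreover have "y = p + (y - p)"
    by simp
  ultimately show "y \<in> setsum A W"
    using pq(1) unfolding setsum_def by blast
qed

lemma MF_sum_subset_setsum:
  assumes "ordered_vs le" "ordered_vs sle" "balanced A" "balanced U" "MF1 le sle A \<subseteq> U"
  shows "setsum (MF1 le sle A) (MF2 le sle A) \<subseteq> setsum U U"
proof (rule setsum_mono)
  show "MF2 le sle A \<subseteq> U"
  proof
    fix z assume "z \<in> MF2 le sle A"
    then have "- z \<in> MF1 le sle A"
      using uminus_mem_MF1[OF assms(2,1,3)] by (simp add: MF2_eq_MF1_swap)
    then show "z \<in> U"
      using assms(5) balanced_uminus[OF assms(4), of "- z"] by auto
  qed
qed (fact assms(5))

lemma nhd0_MF_sum_subset:
  assumes le: "ordered_vs le" and sle: "ordered_vs sle" and vt: "vector_topology T"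
    and lmf: "locally_mixed_full le sle T" and "nhd0 T N"
    and base: "\<And>M. nhd0 T M \<Longrightarrow> \<exists>A. nhd0 T A \<and> A \<subseteq> M \<and> balanced A \<and> P A"
  obtains A where "nhd0 T A" "balanced A" "P A" "setsum (MF1 le sle A) (MF2 le sle A) \<subseteq> N"
proof -
  obtain U where U: "nhd0 T U" "balanced U" "setsum U U \<subseteq> N"
    using vt \<open>nhd0 T N\<close> by (rule nhd0_balanced_half)
  obtain V where V: "nhd0 T V" "setsum V V \<subseteq> U"
    using vt U(1) by (rule nhd0_half)
  obtain W where W: "nhd0 T W" "W \<subseteq> V" and full: "\<And>x y. y \<in> W \<Longrightarrow> sle 0 x \<Longrightarrow> le x y \<Longrightarrow> x \<in> W"
    using lmf V(1) unfolding locally_mixed_full_def by blast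
  obtain M where M: "nhd0 T M" "setsum M M \<subseteq> W"
    using vt W(1) by (rule nhd0_half)
  obtain A where A: "nhd0 T A" "A \<subseteq> M" "balanced A" "P A"
    using base[OF M(1)] by blast
  have diff: "q - p \<in> W" if "p \<in> A" "q \<in> A" for p q
  proof -
    have "q + - p \<in> setsum M M"
      using A(2) balanced_uminus[OF A(3)] that unfolding setsum_def by blast
    with M(2) show ?thesis
      by auto
  qed
  have "MF1 le sle A \<subseteq> setsum A W"
    using le sle full diff by (rule MF1_subset_setsum)
  also have "\<dots> \<subseteq> setsum V V"
  proof (rule setsum_mono)
    have "A \<subseteq> setsum M M"
      using A(2) subset_setsum[OF nhd0_zero[OF M(1)]] by blast
    then show "A \<subseteq> V"
      using M(2) W(2) by blast
  qed (fact W(2))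
  also have "\<dots> \<subseteq> U"
    by (fact V(2))
  finally have "MF1 le sle A \<subseteq> U" .
  with le sle A(3) U(2) have "setsum (MF1 le sle A) (MF2 le sle A) \<subseteq> setsum U U"
    by (rule MF_sum_subset_setsum)
  then have "setsum (MF1 le sle A) (MF2 le sle A) \<subseteq> N"
    using U(3) by (rule order_trans)
  with A(1,3,4) show thesis
    by (rule that)
qed

lemma mixed_full_nhd0_exists:
  assumes le: "ordered_vs le" and sle: "ordered_vs sle" and vt: "vector_topology T"
    and lmf: "locally_mixed_full le sle T" and N: "nhd0 T N"
    and base: "\<And>M. nhd0 T M \<Longrightarrow> \<exists>A. nhd0 T A \<and> A \<subseteq> M \<and> balanced A \<and> P A"
    and preserve: "\<And>A. P A \<Longrightarrow> Q (setsum (MF1 le sle A) (MF2 le sle A))"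
  shows "\<exists>W. nhd0 T W \<and> W \<subseteq> N \<and> balanced W \<and> absorbing W \<and> Q W \<and>
           (\<forall>x y. y \<in> W \<and> le 0 x \<and> sle x y \<longrightarrow> x \<in> W) \<and>
           (\<forall>x y. y \<in> W \<and> sle 0 x \<and> le x y \<longrightarrow> x \<in> W)"
proof -
  obtain A where A: "nhd0 T A" "balanced A" "P A" "setsum (MF1 le sle A) (MF2 le sle A) \<subseteq> N"
    using le sle vt lmf N base by (rule nhd0_MF_sum_subset)
  have "nhd0 T (setsum (MF1 le sle A) (MF2 le sle A))"
    using A(1) subset_MF_sum[OF le sle nhd0_zero[OF A(1)]] by (rule nhd0_mono)
  moreover note MF_sum_properties[OF le sle A(2) nhd0_absorbing[OF vt A(1)]]
  ultimately show ?thesis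
    using A(4) preserve[OF A(3)] by blast
qed

theorem proposition3p8:
  fixes le sle :: "'a::real_vector \<Rightarrow> 'a \<Rightarrow> bool" and T :: "'a topology"
  assumes "top_mixed_lattice_space le sle T"
  shows "(\<forall>A. balanced A \<and> absorbing A \<longrightarrow>
            MF1 le sle A = uminus ` MF2 le sle A \<and>
            balanced (setsum (MF1 le sle A) (MF2 le sle A)) \<and>
            absorbing (setsum (MF1 le sle A) (MF2 le sle A)) \<and>
            (\<forall>x y. y \<in> setsum (MF1 le sle A) (MF2 le sle A) \<and> le 0 x \<and> sle x y
                   \<longrightarrow> x \<in> setsum (MF1 le sle A) (MF2 le sle A)) \<and>
            (\<forall>x y. y \<in> setsum (MF1 le sle A) (MF2 le sle A) \<and> sle 0 x \<and> le x y
                   \<longrightarrow> x \<in> setsum (MF1 le sle A) (MF2 le sle A)) \<and>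
            (convex A \<longrightarrow> convex (MF1 le sle A) \<and> convex (MF2 le sle A) \<and>
                          convex (setsum (MF1 le sle A) (MF2 le sle A))))
       \<and>
         (locally_mixed_full le sle T \<longrightarrow>
            (\<forall>N. nhd0 T N \<longrightarrow> (\<exists>W. nhd0 T W \<and> W \<subseteq> N \<and> balanced W \<and> absorbing W \<and>
                (\<forall>x y. y \<in> W \<and> le 0 x \<and> sle x y \<longrightarrow> x \<in> W) \<and>
                (\<forall>x y. y \<in> W \<and> sle 0 x \<and> le x y \<longrightarrow> x \<in> W))) \<and>
            (locally_convex_top T \<longrightarrow>
              (\<forall>N. nhd0 T N \<longrightarrow> (\<exists>W. nhd0 T W \<and> W \<subseteq> N \<and> balanced W \<and> absorbing W \<and>
                convex W \<and>
                (\<forall>x y. y \<in> W \<and> le 0 x \<and> sle x y \<longrightarrow> x \<in> W) \<and>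
                (\<forall>x y. y \<in> W \<and> sle 0 x \<and> le x y \<longrightarrow> x \<in> W)))))"
proof -
  from assms have le: "ordered_vs le" and sle: "ordered_vs sle" and vt: "vector_topology T"
    unfolding top_mixed_lattice_space_def mixed_lattice_vs_def by simp_all
  have balanced_base: "\<exists>A. nhd0 T A \<and> A \<subseteq> M \<and> balanced A \<and> True" if "nhd0 T M" for M
    using nhd0_balanced_core[OF vt that] balanced_core_subset balanced_balanced_core by blast
  have convex_base: "\<exists>A. nhd0 T A \<and> A \<subseteq> M \<and> balanced A \<and> convex A"
    if "locally_convex_top T" and M: "nhd0 T M" for M
  proof -
    obtain C where "nhd0 T C" "C \<subseteq> M" "convex C"
      using \<open>locally_convex_top T\<close> M unfolding locally_convex_top_def by blast
    then show ?thesis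
      using nhd0_balanced_core[OF vt] balanced_core_subset balanced_balanced_core
        convex_balanced_core by blast
  qed
  show ?thesis
    apply (rule conjI)
    subgoal
      using MF_sum_properties[OF le sle] by blast
    apply (intro impI conjI allI)
    subgoal premises prems for N
      using mixed_full_nhd0_exists[OF le sle vt prems balanced_base, of "\<lambda>_. True"] by simp
    subgoal premises prems for N
      using mixed_full_nhd0_exists[where P = convex and Q = convex,
          OF le sle vt prems(1,3) convex_base[OF prems(2)] convex_MF_sum[OF le sle]] .
    done
qed

end
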